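(* Let $q$ be an odd prime power and $f(X)=X(X^{q-1}-c)^{q+1}$ on $\mathbb{F}_{q^2}$, with $a,\beta,g,L_{[u:v]},\mathbb{P}^1$ as in the context. If $c\in\mathbb{F}_q\setminus\{0,1,-1\}$, then $\mathcal{G}(f)$ is isomorphic to \[ \mathcal{C}_1\oplus\bigoplus_{L_{[u:v]}\in\mathbb{P}^1}\frac{q-1}{\operatorname{ord}(g(u,v))}\times\mathcal{C}_{\operatorname{ord}(g(u,v))}. \] If $c=\pm1$, then $\mathcal{G}(f)$ is isomorphic to \[ (\mathcal{C}_1,\mathcal{T}_{q-1})\oplus\bigoplus_{L_{[u:v]}\in\mathbb{P}^1\setminus\{L_0\}}\frac{q-1}{\operatorname{ord}(g(u,v))}\times\mathcal{C}_{\operatorname{ord}(g(u,v))}, \] where $L_0=L_{[1:0]}$ if $c=1$ and $L_0=L_{[0:1]}$ if $c=-1$.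
   Context: $a\in\mathbb{F}_q^*$ is a non-square in $\mathbb{F}_q$, $\beta\in\mathbb{F}_{q^2}$ with $\beta^2=a$; every element of $\mathbb{F}_{q^2}$ is uniquely $x+y\beta$, $x,y\in\mathbb{F}_q$. For $(x,y)\neq(0,0)$, $g(x,y)=\frac{(1-c)^2x^2-(1+c)^2y^2a}{x^2-y^2a}\in\mathbb{F}_q$, which is invariant under scaling $(x,y)$ by $\mathbb{F}_q^*$. For $(u,v)\neq(0,0)$, $L_{[u:v]}=\{\lambda(u+v\beta):\lambda\in\mathbb{F}_q\}$ and $\mathbb{P}^1$ is the set of these $q+1$ lines; $\operatorname{ord}(g(u,v))$ is the multiplicative order in $\mathbb{F}_q^*$. $\mathcal{G}(f)$ is the functional graph (vertices $\mathbb{F}_{q^2}$, edges $\langle x,f(x)\rangle$). Graph notation: $\mathcal{C}_n$ is an oriented cycle of length $n$; $\mathcal{T}_m$ is the directed tree with $m+1$ vertices $P_1,\dots,P_{m+1}$ and edges $P_i\to P_{m+1}$ for $1\le i\le m$; $(\mathcal{C}_n,\mathcal{T}_m)$ is the graph obtained by replacing each vertex of $\mathcal{C}_n$ by a copy of $\mathcal{T}_m$ (identifying the cycle vertex with the root $P_{m+1}$); $\mathcal{G}\oplus\mathcal{H}$ is disjoint union; $k\times\mathcal{H}$ is the disjoint union of $k$ copies of $\mathcal{H}$. *)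

theory Defs
  imports "HOL-Computational_Algebra.Primes"
begin

type_synonym 'v dgraph = "'v set \<times> ('v \<times> 'v) set"

definition fgraph :: "('a \<Rightarrow> 'a) \<Rightarrow> 'a dgraph" where
  "fgraph f = (UNIV, {(x, f x) | x. True})"

definition dg_iso :: "'v dgraph \<Rightarrow> 'w dgraph \<Rightarrow> bool" where
  "dg_iso G H \<longleftrightarrow> (\<exists>h. bij_betw h (fst G) (fst H) \<and>
     (\<forall>x\<in>fst G. \<forall>y\<in>fst G. (x, y) \<in> snd G \<longleftrightarrow> (h x, h y) \<in> snd H))"

text \<open>(C_n, T_m): vertices (i,j), i<n, j<=m; the vertex (i,m) is the root P_{m+1}
  of the i-th tree copy and lies on the cycle; (i,j) -> (i,m) for j<m;
  (i,m) -> ((i+1) mod n, m).\<close>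
definition cyc_tree :: "nat \<Rightarrow> nat \<Rightarrow> (nat \<times> nat) dgraph" where
  "cyc_tree n m = ({(i, j). i < n \<and> j \<le> m},
     {((i, j), (i, m)) | i j. i < n \<and> j < m} \<union>
     {((i, m), ((i + 1) mod n, m)) | i. i < n})"

definition cyc :: "nat \<Rightarrow> (nat \<times> nat) dgraph" where
  "cyc n = cyc_tree n 0"

definition dg_union :: "'v dgraph \<Rightarrow> 'w dgraph \<Rightarrow> ('v + 'w) dgraph" where
  "dg_union G H = (Inl ` fst G \<union> Inr ` fst H,
     {(Inl x, Inl y) | x y. (x, y) \<in> snd G} \<union> {(Inr x, Inr y) | x y. (x, y) \<in> snd H})"

definition dg_sum :: "'i set \<Rightarrow> ('i \<Rightarrow> 'v dgraph) \<Rightarrow> ('i \<times> 'v) dgraph" where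
  "dg_sum I G = ({(i, x). i \<in> I \<and> x \<in> fst (G i)},
     {((i, x), (i, y)) | i x y. i \<in> I \<and> (x, y) \<in> snd (G i)})"

definition dg_copies :: "nat \<Rightarrow> 'v dgraph \<Rightarrow> (nat \<times> 'v) dgraph" where
  "dg_copies k H = dg_sum {..<k} (\<lambda>_. H)"

definition mult_ord :: "'a::field \<Rightarrow> nat" where
  "mult_ord x = (LEAST n. 0 < n \<and> x ^ n = 1)"

definition subF :: "nat \<Rightarrow> 'a::{field,finite} set" where
  "subF q = {x. x ^ q = x}"

definition Lline :: "nat \<Rightarrow> 'a::{field,finite} \<Rightarrow> 'a \<Rightarrow> 'a \<Rightarrow> 'a set" where
  "Lline q \<beta> u v = {l * (u + v * \<beta>) | l. l \<in> subF q}"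

definition P1 :: "nat \<Rightarrow> 'a::{field,finite} \<Rightarrow> 'a set set" where
  "P1 q \<beta> = {Lline q \<beta> u v | u v. u \<in> subF q \<and> v \<in> subF q \<and> (u, v) \<noteq> (0, 0)}"

definition gfun :: "'a::field \<Rightarrow> 'a \<Rightarrow> 'a \<Rightarrow> 'a \<Rightarrow> 'a" where
  "gfun c a x y = ((1 - c)^2 * x^2 - (1 + c)^2 * y^2 * a) / (x^2 - y^2 * a)"

text \<open>g evaluated at a spanning pair (u,v) of the line L (well defined by scale invariance).\<close>
definition gline :: "nat \<Rightarrow> 'a::{field,finite} \<Rightarrow> 'a \<Rightarrow> 'a \<Rightarrow> 'a set \<Rightarrow> 'a" where
  "gline q c a \<beta> L = (case (SOME (u, v). u \<in> subF q \<and> v \<in> subF q \<and> (u, v) \<noteq> (0, 0)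
        \<and> L = Lline q \<beta> u v) of (u, v) \<Rightarrow> gfun c a u v)"

definition line_cycles :: "nat \<Rightarrow> 'a::{field,finite} \<Rightarrow> 'a \<Rightarrow> 'a \<Rightarrow> 'a set set
     \<Rightarrow> ('a set \<times> nat \<times> nat \<times> nat) dgraph" where
  "line_cycles q c a \<beta> S = dg_sum S (\<lambda>L. dg_copies ((q - 1) div mult_ord (gline q c a \<beta> L))
        (cyc (mult_ord (gline q c a \<beta> L))))"

end

(*
  Write every element of F_{q^2} as x = u + v\<beta>.  The power x^{q-1}, and hence
  g(x) = (x^{q-1} - c)^{q+1}, is constant on each punctured line L - {0} = F_q^* w, and g(x) is
  fixed by Frobenius, so f(\<lambda> w) = \<lambda> g(w) w acts on every line as multiplication by the scalar
  g(L) \<in> F_q.  If g(L) \<noteq> 0, the cosets of the cyclic group generated by g(L) in F_q^* split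
  L - {0} into (q - 1)/ord g(L) cycles of length ord g(L).  Since x^{q-1} has norm 1,
  g(L) = 0 forces c = \<plusminus>1, and then exactly one line (F_q if c = 1, \<beta> F_q if c = -1) is mapped
  to the fixed point 0, forming the tree (C_1, T_{q-1}).  Finally x^q = u - v\<beta> turns
  g(u + v\<beta>) into the rational function of the statement.
*)

theory Submission
  imports Defs "HOL-Library.Disjoint_Sets" "HOL-Algebra.Algebraic_Closure_Type"
    "HOL-Number_Theory.Residues"
begin

(* The HOL-Algebra imports shadow prime and reserve X as polynomial syntax; the theorem below
   needs both with their usual meaning. *)
hide_const (open) Divisibility.prime
no_notation Polynomials.var (\<open>X\<index>\<close>)

section \<open>Functional graphs\<close>

definition fgraph_on :: "'v set \<Rightarrow> ('v \<Rightarrow> 'v) \<Rightarrow> 'v dgraph" where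
  "fgraph_on V f = (V, {(x, f x) | x. x \<in> V})"

lemma fgraph_eq_fgraph_on: "fgraph f = fgraph_on UNIV f"
  by (simp add: fgraph_def fgraph_on_def)

lemma cyc_tree_1_eq_fgraph_on: "cyc_tree 1 M = fgraph_on ({0} \<times> {..M}) (\<lambda>_. (0, M))"
  unfolding cyc_tree_def fgraph_on_def by (auto simp: le_less)

lemma cyc_eq_fgraph_on: "cyc n = fgraph_on ({..<n} \<times> {0}) (\<lambda>(i, _). (Suc i mod n, 0))"
  unfolding cyc_def cyc_tree_def fgraph_on_def by auto

lemma dg_union_fgraph_on:
  "dg_union (fgraph_on V f) (fgraph_on W g) = fgraph_on (Inl ` V \<union> Inr ` W) (map_sum f g)"
  unfolding dg_union_def fgraph_on_def by auto

lemma dg_sum_fgraph_on: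
  "dg_sum I (\<lambda>i. fgraph_on (V i) (f i)) = fgraph_on (Sigma I V) (\<lambda>(i, x). (i, f i x))"
  unfolding dg_sum_def fgraph_on_def by auto

lemma dg_copies_fgraph_on:
  "dg_copies k (fgraph_on V f) = fgraph_on ({..<k} \<times> V) (\<lambda>(i, x). (i, f x))"
  unfolding dg_copies_def by (simp add: dg_sum_fgraph_on)

lemma dg_iso_fgraph_onI:
  assumes "bij_betw k W V" and "\<And>w. w \<in> W \<Longrightarrow> \<tau> w \<in> W"
    and "\<And>w. w \<in> W \<Longrightarrow> k (\<tau> w) = \<sigma> (k w)"
  shows "dg_iso (fgraph_on V \<sigma>) (fgraph_on W \<tau>)"
proof -
  define h where "h = inv_into W k"
  have h: "bij_betw h V W"
    unfolding h_def using assms(1) by (rule bij_betw_inv_into)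
  have hW: "h x \<in> W" and kh: "k (h x) = x" if "x \<in> V" for x
    using that assms(1) h by (auto simp: h_def bij_betw_def bij_betw_inv_into_right)
  have "y = \<sigma> x \<longleftrightarrow> h y = \<tau> (h x)" if "x \<in> V" "y \<in> V" for x y
    using that assms hW kh bij_betw_inv_into_left h_def by metis
  then show ?thesis
    unfolding dg_iso_def fgraph_on_def using h hW by auto
qed

lemma bij_betw_case_sum:
  assumes "bij_betw f A C" and "bij_betw g B D" and "C \<inter> D = {}"
  shows "bij_betw (case_sum f g) (Inl ` A \<union> Inr ` B) (C \<union> D)"
proof (rule bij_betw_combine[OF _ _ assms(3)])
  show "bij_betw (case_sum f g) (Inl ` A) C"
    using assms(1) by (simp add: bij_betw_def inj_on_def image_image)
  show "bij_betw (case_sum f g) (Inr ` B) D"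
    using assms(2) by (simp add: bij_betw_def inj_on_def image_image)
qed

lemma bij_betw_Sigma_UN:
  assumes "\<And>i. i \<in> I \<Longrightarrow> bij_betw (f i) (A i) (B i)" and "disjoint_family_on B I"
  shows "bij_betw (\<lambda>(i, x). f i x) (Sigma I A) (\<Union>i\<in>I. B i)"
proof -
  have "bij_betw (\<lambda>(i, x). f i x) ({i} \<times> A i) (B i)" if "i \<in> I" for i
    using assms(1)[OF that] by (fastforce simp: bij_betw_def inj_on_def image_iff)
  then have "bij_betw (\<lambda>(i, x). f i x) (\<Union>i\<in>I. {i} \<times> A i) (\<Union>i\<in>I. B i)"
    by (rule bij_betw_UNION_disjoint[OF assms(2)])
  then show ?thesis
    by (simp add: Sigma_def)
qed

lemma dg_iso_fgraph_tree_cycles: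
  fixes f :: "'a \<Rightarrow> 'a" and \<theta> :: "nat \<times> nat \<Rightarrow> 'a"
    and \<kappa> :: "'i \<Rightarrow> nat \<times> nat \<times> nat \<Rightarrow> 'a"
  assumes tree_bij: "bij_betw \<theta> ({0} \<times> {..M}) T"
    and tree_comm: "\<And>j. j \<le> M \<Longrightarrow> f (\<theta> (0, j)) = \<theta> (0, M)"
    and cycles_bij: "\<And>i. i \<in> I \<Longrightarrow> bij_betw (\<kappa> i) ({..<m i} \<times> {..<d i} \<times> {0}) (C i)"
    and cycles_comm: "\<And>i j l. i \<in> I \<Longrightarrow> j < m i \<Longrightarrow> l < d i \<Longrightarrow>
      f (\<kappa> i (j, l, 0)) = \<kappa> i (j, Suc l mod d i, 0)"
    and disj: "disjoint_family_on C I" "T \<inter> (\<Union>i\<in>I. C i) = {}"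
    and cover: "T \<union> (\<Union>i\<in>I. C i) = UNIV"
  shows "dg_iso (fgraph f) (dg_union (cyc_tree 1 M) (dg_sum I (\<lambda>i. dg_copies (m i) (cyc (d i)))))"
proof -
  define W :: "(nat \<times> nat + 'i \<times> nat \<times> nat \<times> nat) set"
    where "W = Inl ` ({0} \<times> {..M}) \<union> Inr ` Sigma I (\<lambda>i. {..<m i} \<times> {..<d i} \<times> {0})"
  define \<tau> :: "nat \<times> nat + 'i \<times> nat \<times> nat \<times> nat \<Rightarrow> nat \<times> nat + 'i \<times> nat \<times> nat \<times> nat"
    where "\<tau> = map_sum (\<lambda>_. (0, M)) (\<lambda>(i, j, l, _). (i, j, Suc l mod d i, 0))"
  define k where "k = case_sum \<theta> (\<lambda>(i, x). \<kappa> i x)"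
  have target: "dg_union (cyc_tree 1 M) (dg_sum I (\<lambda>i. dg_copies (m i) (cyc (d i)))) = fgraph_on W \<tau>"
    unfolding cyc_tree_1_eq_fgraph_on cyc_eq_fgraph_on dg_copies_fgraph_on dg_sum_fgraph_on
      dg_union_fgraph_on W_def \<tau>_def
    by (simp add: case_prod_unfold)
  have "bij_betw k W UNIV"
    unfolding k_def W_def cover[symmetric]
    by (intro bij_betw_case_sum bij_betw_Sigma_UN tree_bij cycles_bij disj)
  moreover have "\<tau> w \<in> W" and "k (\<tau> w) = f (k w)" if "w \<in> W" for w
    using that tree_comm cycles_comm by (auto simp: W_def \<tau>_def k_def)
  ultimately show ?thesis
    unfolding target fgraph_eq_fgraph_on by (intro dg_iso_fgraph_onI)
qed

section \<open>Finite fields\<close>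

lemma pow_ring_of_type_algebra: "x [^]\<^bsub>ring_of_type_algebra\<^esub> (n::nat) = (x::'a::field) ^ n"
  by (induction n) (simp_all add: ring_of_type_algebra_def)

lemma power_card_UNIV_minus_1:
  fixes x :: "'a::{field,finite}"
  assumes "x \<noteq> 0"
  shows "x ^ (card (UNIV :: 'a set) - 1) = 1"
proof -
  let ?K = "ring_of_type_algebra :: 'a ring"
  interpret field ?K by (rule field_from_type_algebra)
  interpret G: group "Multiplicative_Group.mult_of ?K" by (rule field_mult_group)
  have "x \<in> carrier (Multiplicative_Group.mult_of ?K)"
    by (simp add: assms ring_of_type_algebra_def)
  note G.pow_order_eq_1[OF this]
  then show ?thesis
    by (simp add: Multiplicative_Group.nat_pow_mult_of pow_ring_of_type_algebra
        Coset.order_def) (simp add: ring_of_type_algebra_def card_Diff_singleton)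
qed

lemma field_units_cyclic:
  obtains \<zeta> :: "'a::{field,finite}" where "\<zeta> \<noteq> 0" and "\<And>x. x \<noteq> 0 \<Longrightarrow> \<exists>i. x = \<zeta> ^ i"
proof -
  let ?K = "ring_of_type_algebra :: 'a ring"
  let ?M = "Multiplicative_Group.mult_of ?K"
  interpret field ?K by (rule field_from_type_algebra)
  have "finite (carrier ?K)"
    by (simp add: ring_of_type_algebra_def)
  then obtain \<zeta> where \<zeta>: "\<zeta> \<in> carrier ?M" and gen: "carrier ?M = {\<zeta> [^]\<^bsub>?K\<^esub> i | i::nat. i \<in> UNIV}"
    using finite_field_mult_group_has_gen by blast
  show ?thesis
  proof (rule that)
    show "\<zeta> \<noteq> 0"
      using \<zeta> by (simp add: ring_of_type_algebra_def)
    fix x :: 'a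
    assume "x \<noteq> 0"
    then have "x \<in> carrier ?M"
      by (simp add: ring_of_type_algebra_def)
    then show "\<exists>i. x = \<zeta> ^ i"
      unfolding gen by (auto simp: pow_ring_of_type_algebra)
  qed
qed

lemma power_mod_eq:
  fixes x :: "'a::monoid_mult"
  assumes "x ^ d = 1"
  shows "x ^ (n mod d) = x ^ n"
proof -
  have "x ^ n = x ^ (n mod d) * (x ^ d) ^ (n div d)"
    by (simp only: power_mult[symmetric] power_add[symmetric] mod_mult_div_eq)
  then show ?thesis
    using assms by simp
qed

lemma mult_ord_dvd_iff:
  fixes x :: "'a::field"
  assumes "x ^ n = 1" and "0 < n"
  shows "x ^ m = 1 \<longleftrightarrow> mult_ord x dvd m"
proof -
  have ex: "0 < n \<and> x ^ n = 1"
    using assms by simp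
  have pos: "0 < mult_ord x" and one: "x ^ mult_ord x = 1"
    unfolding mult_ord_def using LeastI[of "\<lambda>n. 0 < n \<and> x ^ n = 1", OF ex] by auto
  have least: "mult_ord x \<le> k" if "0 < k" "x ^ k = 1" for k
    unfolding mult_ord_def using that by (intro Least_le) simp
  show ?thesis
  proof
    assume "x ^ m = 1"
    then have rem: "x ^ (m mod mult_ord x) = 1"
      using power_mod_eq[OF one] by simp
    show "mult_ord x dvd m"
    proof (rule ccontr)
      assume "\<not> mult_ord x dvd m"
      then have "0 < m mod mult_ord x"
        by (simp add: dvd_eq_mod_eq_0)
      from least[OF this rem] show False
        using pos by (meson leD mod_less_divisor)
    qed
  qed (use one in \<open>auto simp: power_mult\<close>)
qed

lemma mult_ord_pos:
  fixes x :: "'a::field"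
  assumes "x ^ n = 1" and "0 < n"
  shows "0 < mult_ord x"
proof -
  have "mult_ord x dvd n"
    using mult_ord_dvd_iff[OF assms] assms(1) by simp
  then show ?thesis
    using assms(2) by (cases "mult_ord x") auto
qed

lemma power_eq_power_iff_mod:
  fixes x :: "'a::idom"
  assumes ord: "\<And>n. x ^ n = 1 \<longleftrightarrow> d dvd n" and "0 < d"
  shows "x ^ i = x ^ j \<longleftrightarrow> i mod d = j mod d"
proof -
  have "x ^ d = 1"
    using ord by simp
  have "x \<noteq> 0"
  proof
    assume "x = 0"
    with \<open>x ^ d = 1\<close> \<open>0 < d\<close> show False
      by (simp add: power_0_left)
  qed
  have inj: "a = b" if "a \<le> b" "b < d" "x ^ a = x ^ b" for a b
  proof -
    have "x ^ a * x ^ (b - a) = x ^ b"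
      using \<open>a \<le> b\<close> by (simp flip: power_add)
    then have "x ^ a * x ^ (b - a) = x ^ a * 1"
      using \<open>x ^ a = x ^ b\<close> by simp
    then have "d dvd b - a"
      using \<open>x \<noteq> 0\<close> ord by simp
    moreover have "b - a < d"
      using that by linarith
    ultimately show "a = b"
      using that by (cases "b - a = 0") (auto dest: dvd_imp_le)
  qed
  show ?thesis
  proof
    assume "x ^ i = x ^ j"
    then have "x ^ (i mod d) = x ^ (j mod d)"
      by (simp only: power_mod_eq[OF \<open>x ^ d = 1\<close>])
    then show "i mod d = j mod d"
      using inj[of "i mod d" "j mod d"] inj[of "j mod d" "i mod d"] \<open>0 < d\<close>
      by (cases "i mod d \<le> j mod d") auto
  next
    assume "i mod d = j mod d"
    then show "x ^ i = x ^ j"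
      by (metis power_mod_eq[OF \<open>x ^ d = 1\<close>])
  qed
qed

lemma field_units_generator:
  obtains \<zeta> :: "'a::{field,finite}"
  where "\<And>n. \<zeta> ^ n = 1 \<longleftrightarrow> card (UNIV :: 'a set) - 1 dvd n"
    and "\<And>x. x \<noteq> 0 \<Longrightarrow> \<exists>i. x = \<zeta> ^ i"
proof -
  define N where "N = card (UNIV :: 'a set) - 1"
  obtain \<zeta> :: 'a where "\<zeta> \<noteq> 0" and gen: "\<And>x. x \<noteq> 0 \<Longrightarrow> \<exists>i. x = \<zeta> ^ i"
    using field_units_cyclic by blast
  have "card {0, 1 :: 'a} \<le> card (UNIV :: 'a set)"
    by (rule card_mono) simp_all
  then have "0 < N"
    by (simp add: N_def)
  have \<zeta>N: "\<zeta> ^ N = 1"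
    unfolding N_def using \<open>\<zeta> \<noteq> 0\<close> by (rule power_card_UNIV_minus_1)
  define d where "d = mult_ord \<zeta>"
  have ord: "\<zeta> ^ n = 1 \<longleftrightarrow> d dvd n" for n
    unfolding d_def using \<zeta>N \<open>0 < N\<close> by (rule mult_ord_dvd_iff)
  have "0 < d"
    unfolding d_def using \<zeta>N \<open>0 < N\<close> by (rule mult_ord_pos)
  have "UNIV - {0} \<subseteq> (\<lambda>i. \<zeta> ^ i) ` {..<d}"
  proof
    fix x :: 'a
    assume "x \<in> UNIV - {0}"
    then obtain i where "x = \<zeta> ^ i"
      using gen by blast
    then have "x = \<zeta> ^ (i mod d)"
      using power_mod_eq[of \<zeta> d i] ord by simp
    then show "x \<in> (\<lambda>i. \<zeta> ^ i) ` {..<d}"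
      using \<open>0 < d\<close> by simp
  qed
  then have "card (UNIV - {0::'a}) \<le> card ((\<lambda>i. \<zeta> ^ i) ` {..<d})"
    by (intro card_mono) simp_all
  also have "\<dots> \<le> d"
    using card_image_le[of "{..<d}" "\<lambda>i. \<zeta> ^ i"] by simp
  finally have "N \<le> d"
    by (simp add: N_def card_Diff_singleton)
  moreover have "d dvd N"
    using ord \<zeta>N by simp
  ultimately have "d = N"
    using \<open>0 < N\<close> by (simp add: dvd_imp_le le_antisym)
  then show ?thesis
    using that ord gen unfolding N_def by blast
qed

lemma bij_betw_power_lessThan:
  fixes x :: "'a::idom"
  assumes "\<And>n. x ^ n = 1 \<longleftrightarrow> d dvd n" and "0 < d"
  shows "bij_betw (\<lambda>j. x ^ j) {..<d} (range (\<lambda>j. x ^ j))"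
proof -
  have "range (\<lambda>j. x ^ j) \<subseteq> (\<lambda>j. x ^ j) ` {..<d}"
  proof
    fix y
    assume "y \<in> range (\<lambda>j. x ^ j)"
    then obtain j where "y = x ^ j"
      by blast
    then have "y = x ^ (j mod d)"
      using power_eq_power_iff_mod[OF assms] by simp
    moreover have "j mod d < d"
      using \<open>0 < d\<close> by simp
    ultimately show "y \<in> (\<lambda>j. x ^ j) ` {..<d}"
      by blast
  qed
  then have "range (\<lambda>j. x ^ j) = (\<lambda>j. x ^ j) ` {..<d}"
    by blast
  moreover have "inj_on (\<lambda>j. x ^ j) {..<d}"
    by (rule inj_onI) (simp add: power_eq_power_iff_mod[OF assms])
  ultimately show ?thesis
    by (simp add: bij_betw_def)
qed

lemma inj_on_power_mult_power:
  fixes z g :: "'a::idom"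
  assumes z: "\<And>n. z ^ n = 1 \<longleftrightarrow> m * d dvd n" and g: "\<And>n. g ^ n = 1 \<longleftrightarrow> d dvd n"
    and "0 < m" and "0 < d"
  shows "inj_on (\<lambda>(j, i). z ^ j * g ^ i) ({..<m} \<times> {..<d})"
proof (rule inj_onI, clarify)
  fix j i j' i'
  assume ji: "j < m" "i < d" "j' < m" "i' < d" and eq: "z ^ j * g ^ i = z ^ j' * g ^ i'"
  have pow_d: "(z ^ j * g ^ i) ^ d = z ^ (j * d)" for j i
    using g[of "i * d"] by (simp add: power_mult_distrib flip: power_mult)
  have "z ^ (j * d) = z ^ (j' * d)"
    using pow_d[of j i] pow_d[of j' i'] eq by simp
  then have "(j * d) mod (m * d) = (j' * d) mod (m * d)"
    using power_eq_power_iff_mod[OF z] \<open>0 < m\<close> \<open>0 < d\<close> by simp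
  then have "j = j'"
    using ji \<open>0 < d\<close> by (simp add: mod_mult_mult2)
  moreover have "z \<noteq> 0"
    using z[of "m * d"] \<open>0 < m\<close> \<open>0 < d\<close> by (auto simp: power_0_left)
  with eq \<open>j = j'\<close> have "g ^ i = g ^ i'"
    by simp
  then have "i = i'"
    using ji by (simp add: power_eq_power_iff_mod[OF g \<open>0 < d\<close>])
  ultimately show "j = j' \<and> i = i'"
    by simp
qed

lemma frobenius_add_prime_power:
  fixes x y :: "'a::{field,finite}"
  assumes "prime p" and "card (UNIV :: 'a set) = p ^ n"
  shows "(x + y) ^ (p ^ k) = x ^ (p ^ k) + y ^ (p ^ k)"
proof -
  have "0 < CHAR('a)"
    by (rule finite_imp_CHAR_pos) simp
  then have "prime CHAR('a)"
    by (rule prime_CHAR_semidom)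
  moreover have "CHAR('a) dvd p ^ n"
    using CHAR_dvd_CARD[where 'a = 'a] assms(2) by simp
  ultimately have "CHAR('a) = p"
    using assms(1) by (metis prime_dvd_power primes_dvd_imp_eq)
  with \<open>prime CHAR('a)\<close> show ?thesis
    by (intro freshmans_dream') simp_all
qed

section \<open>The quadratic extension and its lines\<close>

(* frobenius_add says that q is a power of the characteristic. *)
locale quadratic_extension =
  fixes q :: nat and \<beta> :: "'a::{field,finite}"
  assumes odd_q: "odd q" and q_gt_1: "1 < q"
    and card_UNIV: "card (UNIV :: 'a set) = q ^ 2"
    and frobenius_add: "(x + y) ^ q = x ^ q + (y ^ q :: 'a)"
    and beta_sq_in_subF: "\<beta> ^ 2 \<in> subF q"
    and beta_notin_subF: "\<beta> \<notin> subF q"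
begin

lemma frobenius_minus: "(- x) ^ q = - (x ^ q :: 'a)"
  using odd_q by simp

lemma frobenius_diff: "(x - y) ^ q = x ^ q - (y ^ q :: 'a)"
  using frobenius_add[of x "- y"] by (simp add: frobenius_minus)

lemma subF_add: "(x::'a) \<in> subF q \<Longrightarrow> y \<in> subF q \<Longrightarrow> x + y \<in> subF q"
  by (simp add: subF_def frobenius_add)

lemma subF_diff: "(x::'a) \<in> subF q \<Longrightarrow> y \<in> subF q \<Longrightarrow> x - y \<in> subF q"
  by (simp add: subF_def frobenius_diff)

lemma subF_mult: "(x::'a) \<in> subF q \<Longrightarrow> y \<in> subF q \<Longrightarrow> x * y \<in> subF q"
  by (simp add: subF_def power_mult_distrib)

lemma subF_divide: "(x::'a) \<in> subF q \<Longrightarrow> y \<in> subF q \<Longrightarrow> x / y \<in> subF q"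
  by (simp add: subF_def power_divide)

lemma subF_minus: "(x::'a) \<in> subF q \<Longrightarrow> - x \<in> subF q"
  by (simp add: subF_def frobenius_minus)

lemma subF_power: "(x::'a) \<in> subF q \<Longrightarrow> x ^ n \<in> subF q"
proof -
  assume "x \<in> subF q"
  have "(x ^ n) ^ q = (x ^ q) ^ n"
    by (simp add: mult.commute flip: power_mult)
  with \<open>x \<in> subF q\<close> show ?thesis
    by (simp add: subF_def)
qed

lemma zero_in_subF: "(0::'a) \<in> subF q"
  using q_gt_1 by (simp add: subF_def)

lemma one_in_subF: "(1::'a) \<in> subF q"
  by (simp add: subF_def)

lemma power_q: "(x::'a) ^ q = x ^ (q - 1) * x"
  using q_gt_1 by (simp flip: power_Suc2)

lemma subF_iff_power_q_minus_1: "(x::'a) \<noteq> 0 \<Longrightarrow> x \<in> subF q \<longleftrightarrow> x ^ (q - 1) = 1"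
  by (auto simp: subF_def power_q)

lemma subF_units_iff: "(x::'a) \<in> subF q - {0} \<longleftrightarrow> x ^ (q - 1) = 1"
  using q_gt_1 by (cases "x = 0") (simp_all add: subF_iff_power_q_minus_1 power_0_left)

lemma beta_nonzero: "\<beta> \<noteq> 0"
  using beta_notin_subF zero_in_subF by blast

lemma beta_power_q: "\<beta> ^ q = - \<beta>"
proof -
  have "(\<beta> ^ q) ^ 2 = (\<beta> ^ 2) ^ q"
    by (simp flip: power_mult add: mult.commute)
  then have "(\<beta> ^ q - \<beta>) * (\<beta> ^ q + \<beta>) = 0"
    using beta_sq_in_subF by (simp add: subF_def power2_eq_square algebra_simps)
  moreover have "\<beta> ^ q \<noteq> \<beta>"
    using beta_notin_subF by (simp add: subF_def)
  ultimately show ?thesis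
    by (simp add: eq_neg_iff_add_eq_0)
qed

lemma beta_power_q_minus_1: "\<beta> ^ (q - 1) = - 1"
proof -
  have "\<beta> ^ (q - 1) * \<beta> = (- 1) * \<beta>"
    using beta_power_q by (simp add: power_q)
  then show ?thesis
    using beta_nonzero by (simp only: mult_cancel_right) simp
qed

lemma one_neq_minus_one: "(1::'a) \<noteq> - 1"
proof
  assume one: "(1::'a) = - 1"
  have "\<beta> ^ q = (- 1) * \<beta>"
    by (simp add: beta_power_q)
  also have "\<dots> = \<beta>"
    by (simp flip: one)
  finally show False
    using beta_notin_subF by (simp add: subF_def)
qed

lemma frobenius_conj: "u \<in> subF q \<Longrightarrow> v \<in> subF q \<Longrightarrow> (u + v * \<beta>) ^ q = u - v * \<beta>"
  by (simp add: frobenius_add power_mult_distrib beta_power_q subF_def)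

lemma add_mult_beta_eq_0_iff:
  assumes "u \<in> subF q" "v \<in> subF q"
  shows "u + v * \<beta> = 0 \<longleftrightarrow> u = 0 \<and> v = 0"
proof
  assume "u + v * \<beta> = 0"
  moreover have "v = 0" if "u + v * \<beta> = 0"
  proof (rule ccontr)
    assume "v \<noteq> 0"
    with that have "\<beta> = - u / v"
      by (simp add: field_simps add_eq_0_iff)
    then have "\<beta> \<in> subF q"
      using assms by (simp add: subF_divide subF_minus)
    then show False
      using beta_notin_subF by simp
  qed
  ultimately show "u = 0 \<and> v = 0"
    by simp
qed simp

lemma card_UNIV_minus_1: "card (UNIV :: 'a set) - 1 = (q + 1) * (q - 1)"
  using card_UNIV q_gt_1 by (cases q) (auto simp: power2_eq_square algebra_simps)

lemma power_q_sq: "(x::'a) ^ (q ^ 2) = x"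
proof (cases "x = 0")
  case False
  have "x ^ (q ^ 2) = x ^ (card (UNIV :: 'a set) - 1) * x"
    using card_UNIV q_gt_1 by (simp flip: power_Suc2)
  then show ?thesis
    using power_card_UNIV_minus_1[OF False] by simp
qed (use q_gt_1 in simp)

lemma subF_units_eq_range:
  fixes \<zeta> :: 'a
  assumes \<zeta>: "\<And>n. \<zeta> ^ n = 1 \<longleftrightarrow> (q + 1) * (q - 1) dvd n"
    and gen: "\<And>x. x \<noteq> 0 \<Longrightarrow> \<exists>i. x = \<zeta> ^ i"
  shows "subF q - {0} = range (\<lambda>j. (\<zeta> ^ (q + 1)) ^ j)"
proof
  show "range (\<lambda>j. (\<zeta> ^ (q + 1)) ^ j) \<subseteq> subF q - {0}"
  proof (rule image_subsetI)
    fix j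
    have "((\<zeta> ^ (q + 1)) ^ j) ^ (q - 1) = \<zeta> ^ ((q + 1) * (q - 1) * j)"
      by (simp only: power_mult[symmetric] mult.assoc mult.commute mult.left_commute)
    also have "\<dots> = 1"
      using \<zeta> by simp
    finally show "(\<zeta> ^ (q + 1)) ^ j \<in> subF q - {0}"
      by (simp only: subF_units_iff)
  qed
  show "subF q - {0} \<subseteq> range (\<lambda>j. (\<zeta> ^ (q + 1)) ^ j)"
  proof
    fix x :: 'a
    assume x: "x \<in> subF q - {0}"
    then obtain n where n: "x = \<zeta> ^ n"
      using gen by blast
    have "x ^ (q - 1) = 1"
      using x by (simp only: subF_units_iff)
    then have "\<zeta> ^ (n * (q - 1)) = 1"
      using n by (simp add: power_mult)
    then have "(q - 1) * (q + 1) dvd (q - 1) * n"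
      using \<zeta> by (simp add: mult.commute)
    then have "q + 1 dvd n"
      using q_gt_1 by (simp only: nat_mult_dvd_cancel_disj) simp
    then obtain t where "n = (q + 1) * t"
      by blast
    then have "x = (\<zeta> ^ (q + 1)) ^ t"
      using n by (simp only: power_mult)
    then show "x \<in> range (\<lambda>j. (\<zeta> ^ (q + 1)) ^ j)"
      by simp
  qed
qed

lemma subF_units_generator:
  obtains z :: 'a where "\<And>j. z ^ j = 1 \<longleftrightarrow> q - 1 dvd j" and "subF q - {0} = range (\<lambda>j. z ^ j)"
proof -
  obtain \<zeta> :: 'a where \<zeta>: "\<And>n. \<zeta> ^ n = 1 \<longleftrightarrow> (q + 1) * (q - 1) dvd n"
    and gen: "\<And>x. x \<noteq> 0 \<Longrightarrow> \<exists>i. x = \<zeta> ^ i"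
    using field_units_generator[where 'a = 'a] unfolding card_UNIV_minus_1 by blast
  have z: "(\<zeta> ^ (q + 1)) ^ j = 1 \<longleftrightarrow> q - 1 dvd j" for j
  proof -
    have "(\<zeta> ^ (q + 1)) ^ j = 1 \<longleftrightarrow> (q + 1) * (q - 1) dvd (q + 1) * j"
      unfolding power_mult[symmetric] by (rule \<zeta>)
    then show ?thesis
      by (simp only: nat_mult_dvd_cancel_disj) simp
  qed
  show ?thesis
  proof (rule that)
    show "(\<zeta> ^ (q + 1)) ^ j = 1 \<longleftrightarrow> q - 1 dvd j" for j
      by (fact z)
    show "subF q - {0} = range (\<lambda>j. (\<zeta> ^ (q + 1)) ^ j)"
      by (rule subF_units_eq_range[OF \<zeta> gen])
  qed
qed

lemma subF_units_enumeration: obtains e :: "nat \<Rightarrow> 'a" where "bij_betw e {..<q - 1} (subF q - {0::'a})"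
proof -
  obtain z :: 'a where "\<And>j. z ^ j = 1 \<longleftrightarrow> q - 1 dvd j" and "subF q - {0} = range (\<lambda>j. z ^ j)"
    by (metis subF_units_generator)
  moreover have "0 < q - 1"
    using q_gt_1 by simp
  ultimately have "bij_betw (\<lambda>j. z ^ j) {..<q - 1} (subF q - {0})"
    by (simp add: bij_betw_power_lessThan)
  then show ?thesis
    by (rule that)
qed

lemma card_subF_units: "card (subF q - {0::'a}) = q - 1"
proof -
  obtain e where "bij_betw e {..<q - 1} (subF q - {0::'a})"
    by (rule subF_units_enumeration)
  then show ?thesis
    by (simp flip: bij_betw_same_card)
qed

lemma card_subF: "card (subF q :: 'a set) = q"
  using card_subF_units zero_in_subF q_gt_1 by (simp add: card_Diff_singleton)

lemma subF_unit_mult_ord: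
  fixes g :: 'a
  assumes "g \<in> subF q" and "g \<noteq> 0"
  shows "g ^ n = 1 \<longleftrightarrow> mult_ord g dvd n" and "0 < mult_ord g" and "mult_ord g dvd q - 1"
proof -
  have "g ^ (q - 1) = 1"
    using subF_units_iff[of g] assms by simp
  moreover have "0 < q - 1"
    using q_gt_1 by simp
  ultimately show "g ^ n = 1 \<longleftrightarrow> mult_ord g dvd n" and "0 < mult_ord g" and "mult_ord g dvd q - 1"
    using mult_ord_dvd_iff mult_ord_pos by blast+
qed

lemma subF_units_cosets:
  fixes g :: 'a
  assumes "g \<in> subF q" "g \<noteq> 0"
  defines "d \<equiv> mult_ord g"
  obtains e :: "nat \<times> nat \<Rightarrow> 'a"
  where "bij_betw e ({..<(q - 1) div d} \<times> {..<d}) (subF q - {0})"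
    and "\<And>j i. e (j, Suc i mod d) = e (j, i) * g"
proof -
  obtain z :: 'a where z: "\<And>j. z ^ j = 1 \<longleftrightarrow> q - 1 dvd j"
    and z_range: "subF q - {0} = range (\<lambda>j. z ^ j)"
    by (metis subF_units_generator)
  have g: "g ^ n = 1 \<longleftrightarrow> d dvd n" for n
    unfolding d_def using assms(1,2) by (rule subF_unit_mult_ord)
  have "0 < d" and "d dvd q - 1"
    unfolding d_def using assms(1,2) by (rule subF_unit_mult_ord)+
  define m where "m = (q - 1) div d"
  have md: "m * d = q - 1"
    using \<open>d dvd q - 1\<close> by (simp add: m_def)
  (* e enumerates the cosets z^j <g>, j < m, of <g> in the cyclic group F_q^* = <z>. *)
  define e where "e = (\<lambda>(j, i). z ^ j * g ^ i)"
  have unit: "e (j, i) \<in> subF q - {0}" for j i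
  proof -
    have "z ^ j \<in> subF q - {0}"
      unfolding z_range by simp
    moreover have "g ^ i \<in> subF q - {0}"
      using assms by (simp add: subF_power)
    ultimately show ?thesis
      by (simp add: e_def subF_mult)
  qed
  have "0 < m"
    using md q_gt_1 by (cases m) auto
  then have "inj_on e ({..<m} \<times> {..<d})"
    unfolding e_def using z g \<open>0 < d\<close> by (intro inj_on_power_mult_power) (simp_all add: md)
  moreover have "e ` ({..<m} \<times> {..<d}) = subF q - {0}"
  proof (rule card_subset_eq)
    show "e ` ({..<m} \<times> {..<d}) \<subseteq> subF q - {0}"
      using unit by auto
    show "card (e ` ({..<m} \<times> {..<d})) = card (subF q - {0::'a})"
      using \<open>inj_on e _\<close> md by (simp add: card_image card_cartesian_product card_subF_units)
  qed simp
  moreover have "e (j, Suc i mod d) = e (j, i) * g" for j i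
    using power_mod_eq[of g d "Suc i"] g by (simp add: e_def)
  ultimately show ?thesis
    by (intro that[of e]) (simp_all add: bij_betw_def m_def)
qed

lemma exists_add_mult_beta: "\<exists>u\<in>subF q. \<exists>v\<in>subF q. x = u + v * \<beta>"
proof -
  let ?\<phi> = "\<lambda>(u, v). u + v * \<beta>"
  have "inj_on ?\<phi> (subF q \<times> subF q)"
  proof (rule inj_onI, clarsimp)
    fix u v u' v' :: 'a
    assume "u \<in> subF q" "v \<in> subF q" "u' \<in> subF q" "v' \<in> subF q" "u + v * \<beta> = u' + v' * \<beta>"
    then have "(u - u') + (v - v') * \<beta> = 0"
      by (simp add: algebra_simps)
    then show "u = u' \<and> v = v'"
      using add_mult_beta_eq_0_iff \<open>u \<in> subF q\<close> \<open>v \<in> subF q\<close> \<open>u' \<in> subF q\<close> \<open>v' \<in> subF q\<close>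
      by (simp add: subF_diff)
  qed
  then have "card (?\<phi> ` (subF q \<times> subF q)) = card (UNIV :: 'a set)"
    by (simp add: card_image card_cartesian_product card_subF card_UNIV power2_eq_square)
  then have "?\<phi> ` (subF q \<times> subF q) = UNIV"
    by (simp add: card_subset_eq)
  then have "x \<in> ?\<phi> ` (subF q \<times> subF q)"
    by simp
  then show ?thesis
    by force
qed

definition line :: "'a \<Rightarrow> 'a set" where
  "line w = {l * w | l. l \<in> subF q}"

lemma Lline_eq_line: "Lline q \<beta> u v = line (u + v * \<beta>)"
  by (simp add: Lline_def line_def)

lemma zero_in_line: "0 \<in> line w"
  unfolding line_def using zero_in_subF by force

lemma mem_line_self: "w \<in> line w"
  unfolding line_def using one_in_subF by force

lemma line_eq_if_mem:
  assumes "x \<in> line w" and "x \<noteq> 0"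
  shows "line x = line w"
proof -
  obtain l where l: "l \<in> subF q" "x = l * w"
    using assms(1) unfolding line_def by blast
  with assms(2) have "l \<noteq> 0"
    by auto
  have "m * x \<in> line w" if "m \<in> subF q" for m
    unfolding line_def using l that by (auto intro!: exI[of _ "m * l"] subF_mult)
  moreover have "m * w \<in> line x" if "m \<in> subF q" for m
    unfolding line_def using l \<open>l \<noteq> 0\<close> that by (auto intro!: exI[of _ "m / l"] subF_divide)
  ultimately show ?thesis
    unfolding line_def by blast
qed

lemma line_in_P1: "x \<noteq> 0 \<Longrightarrow> line x \<in> P1 q \<beta>"
  using exists_add_mult_beta[of x] by (force simp: P1_def Lline_eq_line)

lemma P1E:
  assumes "L \<in> P1 q \<beta>"
  obtains w where "w \<noteq> 0" and "L = line w"
  using assms add_mult_beta_eq_0_iff by (auto simp: P1_def Lline_eq_line)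

lemma bij_betw_mult_line:
  assumes "w \<noteq> 0"
  shows "bij_betw (\<lambda>l. l * w) (subF q - {0}) (line w - {0})"
  using assms unfolding bij_betw_def inj_on_def line_def by auto

lemma UN_punctured_lines: "(\<Union>L\<in>P1 q \<beta>. L - {0}) = UNIV - {0}"
  using line_in_P1 mem_line_self by (auto elim: P1E)

lemma disjoint_punctured_lines: "disjoint_family_on (\<lambda>L. L - {0}) (P1 q \<beta>)"
  unfolding disjoint_family_on_def by (auto elim!: P1E dest: line_eq_if_mem)

lemma UN_punctured_lines_Diff:
  shows "(\<Union>L\<in>P1 q \<beta> - {line w}. L - {0}) = UNIV - line w"
proof
  show "(\<Union>L\<in>P1 q \<beta> - {line w}. L - {0}) \<subseteq> UNIV - line w"
  proof
    fix x
    assume "x \<in> (\<Union>L\<in>P1 q \<beta> - {line w}. L - {0})"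
    then obtain L where L: "L \<in> P1 q \<beta>" "L \<noteq> line w" "x \<in> L" "x \<noteq> 0"
      by blast
    obtain w' where "L = line w'"
      using L(1) by (rule P1E)
    have "x \<notin> line w"
    proof
      assume "x \<in> line w"
      then have "line x = line w"
        using \<open>x \<noteq> 0\<close> by (rule line_eq_if_mem)
      moreover have "line x = L"
        using L \<open>L = line w'\<close> line_eq_if_mem by blast
      ultimately show False
        using L(2) by simp
    qed
    then show "x \<in> UNIV - line w"
      by simp
  qed
  show "UNIV - line w \<subseteq> (\<Union>L\<in>P1 q \<beta> - {line w}. L - {0})"
  proof
    fix x
    assume "x \<in> UNIV - line w"
    then have "x \<noteq> 0" and "line x \<noteq> line w"
      using zero_in_line mem_line_self by (auto simp del: mem_Collect_eq)
    then show "x \<in> (\<Union>L\<in>P1 q \<beta> - {line w}. L - {0})"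
      using line_in_P1 mem_line_self by blast
  qed
qed

lemma power_q_minus_1_eq_iff_line_eq:
  assumes "x \<noteq> 0" and "y \<noteq> 0"
  shows "x ^ (q - 1) = y ^ (q - 1) \<longleftrightarrow> line x = line y"
proof -
  have "x ^ (q - 1) = y ^ (q - 1) \<longleftrightarrow> (x / y) ^ (q - 1) = 1"
    using assms by (simp add: power_divide)
  also have "\<dots> \<longleftrightarrow> x / y \<in> subF q"
    using assms by (simp add: subF_iff_power_q_minus_1)
  also have "\<dots> \<longleftrightarrow> x \<in> line y"
    unfolding line_def using assms(2) by (auto intro!: exI[of _ "x / y"])
  also have "\<dots> \<longleftrightarrow> line x = line y"
    using mem_line_self[of x] line_eq_if_mem[OF _ assms(1)] by blast
  finally show ?thesis .
qed

lemma power_q_minus_1_power_q_plus_1: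
  fixes x :: 'a
  assumes "x \<noteq> 0"
  shows "(x ^ (q - 1)) ^ (q + 1) = 1"
proof -
  have "(x ^ (q - 1)) ^ (q + 1) = x ^ ((q - 1) * (q + 1))"
    by (rule power_mult[symmetric])
  also have "\<dots> = x ^ (card (UNIV :: 'a set) - 1)"
    using card_UNIV_minus_1 by (simp add: mult.commute)
  also have "\<dots> = 1"
    using assms by (rule power_card_UNIV_minus_1)
  finally show ?thesis .
qed

lemma subF_power_q_plus_1: "y \<in> subF q \<Longrightarrow> y ^ (q + 1) = y ^ 2"
  by (simp add: subF_def power2_eq_square)

lemma glineE:
  assumes "L \<in> P1 q \<beta>"
  obtains u v where "u \<in> subF q" "v \<in> subF q" "(u, v) \<noteq> (0, 0)" "L = Lline q \<beta> u v"
    and "gline q c a \<beta> L = gfun c a u v"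
proof -
  define p where "p = (SOME (u, v). u \<in> subF q \<and> v \<in> subF q \<and> (u, v) \<noteq> (0, 0) \<and> L = Lline q \<beta> u v)"
  have spec: "case p of (u, v) \<Rightarrow> u \<in> subF q \<and> v \<in> subF q \<and> (u, v) \<noteq> (0, 0) \<and> L = Lline q \<beta> u v"
    unfolding p_def by (rule someI_ex) (use assms in \<open>auto simp: P1_def\<close>)
  have g: "gline q c a \<beta> L = (case p of (u, v) \<Rightarrow> gfun c a u v)"
    by (simp add: gline_def p_def)
  obtain u v where "p = (u, v)"
    by (cases p)
  with spec g show ?thesis
    by (intro that[of u v]) simp_all
qed

end

section \<open>The map f\<close>

locale scaling_map = quadratic_extension q \<beta> for q and \<beta> :: "'a::{field,finite}" +
  fixes c :: 'a
  assumes c_in_subF: "c \<in> subF q"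
begin

definition gval :: "'a \<Rightarrow> 'a" where
  "gval w = (w ^ (q - 1) - c) ^ (q + 1)"

definition fmap :: "'a \<Rightarrow> 'a" where
  "fmap x = x * gval x"

lemma gval_scale:
  assumes "l \<in> subF q" and "l \<noteq> 0"
  shows "gval (l * w) = gval w"
proof -
  have "l ^ (q - 1) = 1"
    using subF_iff_power_q_minus_1[OF assms(2)] assms(1) by blast
  then show ?thesis
    by (simp add: gval_def power_mult_distrib)
qed

lemma fmap_scale: "l \<in> subF q \<Longrightarrow> fmap (l * w) = l * gval w * w"
  by (cases "l = 0") (simp_all add: fmap_def gval_scale)

lemma gval_in_subF: "gval w \<in> subF q"
proof -
  define y where "y = w ^ (q - 1) - c"
  have "(y ^ (q + 1)) ^ q = y ^ (q ^ 2) * y ^ q"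
    by (simp add: power2_eq_square algebra_simps flip: power_mult power_add)
  also have "\<dots> = y ^ (q + 1)"
    by (simp add: power_q_sq)
  finally show ?thesis
    by (simp add: subF_def gval_def y_def)
qed

lemma gval_eq_gfun:
  assumes uv: "u \<in> subF q" "v \<in> subF q" and "(u, v) \<noteq> (0, 0)"
  shows "gval (u + v * \<beta>) = gfun c (\<beta> ^ 2) u v"
proof -
  define y where "y = u + v * \<beta>"
  define t where "t = (1 - c) * u + (- ((1 + c) * v)) * \<beta>"
  have "y \<noteq> 0"
    using add_mult_beta_eq_0_iff[OF uv] assms(3) by (simp add: y_def)
  have yq: "y ^ q = u - v * \<beta>"
    unfolding y_def using uv by (rule frobenius_conj)
  have "(1 - c) * u \<in> subF q" "- ((1 + c) * v) \<in> subF q"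
    using uv c_in_subF one_in_subF by (simp_all add: subF_mult subF_diff subF_add subF_minus)
  then have "t ^ q = (1 - c) * u - (- ((1 + c) * v)) * \<beta>"
    unfolding t_def by (rule frobenius_conj)
  then have tq: "t ^ q = (1 - c) * u + (1 + c) * v * \<beta>"
    by simp
  (* y^{q-1} = y^q / y, so g(y) is a quotient of the norms t t^q and y y^q. *)
  have "y ^ (q - 1) - c = t / y"
    using yq \<open>y \<noteq> 0\<close> by (simp add: power_q field_simps t_def y_def)
  then have "gval y = (t * t ^ q) / (y * y ^ q)"
    by (simp add: gval_def power_divide)
  also have "t * t ^ q = (1 - c)^2 * u^2 - (1 + c)^2 * v^2 * \<beta> ^ 2"
    unfolding tq by (simp add: t_def power2_eq_square algebra_simps)
  also have "y * y ^ q = u^2 - v^2 * \<beta> ^ 2"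
    unfolding yq by (simp add: y_def power2_eq_square algebra_simps)
  finally show ?thesis
    by (simp add: gfun_def y_def)
qed

lemma gline_line:
  assumes "w \<noteq> 0"
  shows "gline q c (\<beta> ^ 2) \<beta> (line w) = gval w"
proof -
  obtain u v where uv: "u \<in> subF q" "v \<in> subF q" "(u, v) \<noteq> (0, 0)"
    and line: "line w = Lline q \<beta> u v"
    and gline: "gline q c (\<beta> ^ 2) \<beta> (line w) = gfun c (\<beta> ^ 2) u v"
    using glineE[OF line_in_P1[OF assms], where c = c and a = "\<beta> ^ 2"] by metis
  have "u + v * \<beta> \<in> line w"
    using line mem_line_self by (simp add: Lline_eq_line)
  then obtain l where l: "l \<in> subF q" "u + v * \<beta> = l * w"
    unfolding line_def by blast
  moreover have "u + v * \<beta> \<noteq> 0"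
    using add_mult_beta_eq_0_iff uv by simp
  ultimately have "gval (u + v * \<beta>) = gval w"
    using gval_scale by auto
  then show ?thesis
    using gline gval_eq_gfun[OF uv] by simp
qed

lemma gval_eq_0_iff:
  assumes "w \<noteq> 0"
  shows "gval w = 0 \<longleftrightarrow> (c = 1 \<and> line w = line 1) \<or> (c = - 1 \<and> line w = line \<beta>)"
proof -
  have "gval w = 0 \<longleftrightarrow> w ^ (q - 1) = c"
    by (auto simp: gval_def)
  moreover have "c = 1 \<or> c = - 1" if "w ^ (q - 1) = c"
  proof -
    have "c ^ 2 = 1"
      using power_q_minus_1_power_q_plus_1[OF assms] subF_power_q_plus_1[OF c_in_subF] that by simp
    then show ?thesis
      by (simp add: power2_eq_1_iff)
  qed
  moreover have "w ^ (q - 1) = 1 \<longleftrightarrow> line w = line 1"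
    using power_q_minus_1_eq_iff_line_eq[OF assms one_neq_zero] by simp
  moreover have "w ^ (q - 1) = - 1 \<longleftrightarrow> line w = line \<beta>"
    using power_q_minus_1_eq_iff_line_eq[OF assms beta_nonzero] beta_power_q_minus_1 by simp
  ultimately show ?thesis
    by auto
qed

lemma gline_eq_0_iff:
  assumes "L \<in> P1 q \<beta>"
  shows "gline q c (\<beta> ^ 2) \<beta> L = 0 \<longleftrightarrow> (c = 1 \<and> L = line 1) \<or> (c = - 1 \<and> L = line \<beta>)"
proof -
  obtain w where "w \<noteq> 0" "L = line w"
    using assms by (rule P1E)
  then show ?thesis
    using gline_line gval_eq_0_iff by simp
qed

lemma punctured_line_parametrization:
  assumes "L \<in> P1 q \<beta>" and "gline q c (\<beta> ^ 2) \<beta> L \<noteq> 0"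
  defines "d \<equiv> mult_ord (gline q c (\<beta> ^ 2) \<beta> L)"
  obtains \<kappa> :: "nat \<times> nat \<times> nat \<Rightarrow> 'a"
  where "bij_betw \<kappa> ({..<(q - 1) div d} \<times> {..<d} \<times> {0}) (L - {0})"
    and "\<And>j i. j < (q - 1) div d \<Longrightarrow> i < d \<Longrightarrow> fmap (\<kappa> (j, i, 0)) = \<kappa> (j, Suc i mod d, 0)"
proof -
  obtain w where "w \<noteq> 0" and L: "L = line w"
    using assms(1) by (rule P1E)
  define g where "g = gval w"
  have g: "g \<in> subF q" "g \<noteq> 0" "d = mult_ord g"
    using assms(2) gval_in_subF \<open>w \<noteq> 0\<close> by (simp_all add: g_def d_def L gline_line)
  obtain e where e: "bij_betw e ({..<(q - 1) div d} \<times> {..<d}) (subF q - {0})"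
    and e_step: "\<And>j i. e (j, Suc i mod d) = e (j, i) * g"
    using subF_units_cosets[OF g(1,2)] unfolding g(3) by metis
  define \<kappa> where "\<kappa> = (\<lambda>(j, i, _::nat). e (j, i) * w)"
  define drop_last :: "nat \<times> nat \<times> nat \<Rightarrow> nat \<times> nat" where "drop_last = (\<lambda>(j, i, _). (j, i))"
  have "bij_betw drop_last ({..<(q - 1) div d} \<times> {..<d} \<times> {0}) ({..<(q - 1) div d} \<times> {..<d})"
    by (auto simp: drop_last_def bij_betw_def inj_on_def image_iff)
  then have "bij_betw ((\<lambda>l. l * w) \<circ> e \<circ> drop_last)
      ({..<(q - 1) div d} \<times> {..<d} \<times> {0}) (line w - {0})"
    using e bij_betw_mult_line[OF \<open>w \<noteq> 0\<close>] by (intro bij_betw_trans)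
  then have "bij_betw \<kappa> ({..<(q - 1) div d} \<times> {..<d} \<times> {0}) (L - {0})"
    by (simp add: \<kappa>_def drop_last_def L comp_def case_prod_unfold)
  moreover have "fmap (\<kappa> (j, i, 0)) = \<kappa> (j, Suc i mod d, 0)" if "j < (q - 1) div d" "i < d" for j i
  proof -
    have "e (j, i) \<in> subF q"
      using e that by (auto simp: bij_betw_def)
    then show ?thesis
      by (simp add: \<kappa>_def fmap_scale e_step g_def)
  qed
  ultimately show ?thesis
    by (rule that)
qed

lemma line_tree_parametrization:
  assumes "w \<noteq> 0" and "gval w = 0"
  obtains \<kappa> :: "nat \<times> nat \<Rightarrow> 'a"
  where "bij_betw \<kappa> ({0} \<times> {..q - 1}) (line w)" and "\<And>j. fmap (\<kappa> (0, j)) = \<kappa> (0, q - 1)"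
proof -
  obtain e :: "nat \<Rightarrow> 'a" where e: "bij_betw e {..<q - 1} (subF q - {0})"
    by (metis subF_units_enumeration)
  define \<kappa> where "\<kappa> = (\<lambda>(_::nat, j). if j < q - 1 then e j * w else 0)"
  have "bij_betw snd ({0::nat} \<times> {..<q - 1}) {..<q - 1}"
    by (auto simp: bij_betw_def inj_on_def)
  then have "bij_betw ((\<lambda>l. l * w) \<circ> e \<circ> snd) ({0::nat} \<times> {..<q - 1}) (line w - {0})"
    using e bij_betw_mult_line[OF assms(1)] by (intro bij_betw_trans)
  moreover have "bij_betw \<kappa> ({0} \<times> {..<q - 1}) (line w - {0}) \<longleftrightarrow>
      bij_betw ((\<lambda>l. l * w) \<circ> e \<circ> snd) ({0::nat} \<times> {..<q - 1}) (line w - {0})"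
    by (rule bij_betw_cong) (auto simp: \<kappa>_def)
  moreover have "bij_betw \<kappa> {(0, q - 1)} {0}"
    by (simp add: \<kappa>_def)
  ultimately have "bij_betw \<kappa> ({0} \<times> {..<q - 1} \<union> {(0, q - 1)}) ((line w - {0}) \<union> {0})"
    by (intro bij_betw_combine) auto
  moreover have "{0} \<times> {..<q - 1} \<union> {(0, q - 1)} = {0::nat} \<times> {..q - 1}"
    by auto
  moreover have "(line w - {0}) \<union> {0} = line w"
    using zero_in_line by auto
  moreover have "fmap (\<kappa> (0, j)) = \<kappa> (0, q - 1)" for j
  proof (cases "j < q - 1")
    case True
    then have "e j \<in> subF q"
      using e by (auto simp: bij_betw_def)
    with True show ?thesis
      using assms(2) by (simp add: \<kappa>_def fmap_scale)
  qed (simp add: \<kappa>_def fmap_def)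
  ultimately show ?thesis
    using that by simp
qed

lemma dg_iso_fgraph_fmap:
  fixes \<theta> :: "nat \<times> nat \<Rightarrow> 'a"
  assumes S: "S \<subseteq> P1 q \<beta>" and nonzero: "\<And>L. L \<in> S \<Longrightarrow> gline q c (\<beta> ^ 2) \<beta> L \<noteq> 0"
    and tree_bij: "bij_betw \<theta> ({0} \<times> {..M}) T"
    and tree_comm: "\<And>j. j \<le> M \<Longrightarrow> fmap (\<theta> (0, j)) = \<theta> (0, M)"
    and "T \<inter> (\<Union>L\<in>S. L - {0}) = {}" and "T \<union> (\<Union>L\<in>S. L - {0}) = UNIV"
  shows "dg_iso (fgraph fmap) (dg_union (cyc_tree 1 M) (line_cycles q c (\<beta> ^ 2) \<beta> S))"
proof -
  define d where "d L = mult_ord (gline q c (\<beta> ^ 2) \<beta> L)" for L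
  define P where "P L \<kappa> \<longleftrightarrow> bij_betw \<kappa> ({..<(q - 1) div d L} \<times> {..<d L} \<times> {0}) (L - {0}) \<and>
      (\<forall>j i. j < (q - 1) div d L \<longrightarrow> i < d L \<longrightarrow> fmap (\<kappa> (j, i, 0)) = \<kappa> (j, Suc i mod d L, 0))"
    for L and \<kappa> :: "nat \<times> nat \<times> nat \<Rightarrow> 'a"
  have "\<exists>\<kappa>. P L \<kappa>" if "L \<in> S" for L
  proof -
    have "L \<in> P1 q \<beta>"
      using S that by blast
    then show ?thesis
      unfolding P_def d_def by (rule punctured_line_parametrization[OF _ nonzero[OF that]]) blast
  qed
  then have "\<exists>\<kappa>. \<forall>L\<in>S. P L (\<kappa> L)"
    by (intro bchoice ballI)
  then obtain \<kappa> where \<kappa>: "\<And>L. L \<in> S \<Longrightarrow> P L (\<kappa> L)"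
    by blast
  have cycles: "line_cycles q c (\<beta> ^ 2) \<beta> S = dg_sum S (\<lambda>L. dg_copies ((q - 1) div d L) (cyc (d L)))"
    by (simp add: line_cycles_def d_def)
  show ?thesis
    unfolding cycles
  proof (rule dg_iso_fgraph_tree_cycles[where C = "\<lambda>L. L - {0}" and \<kappa> = \<kappa> and \<theta> = \<theta> and T = T])
    show "bij_betw (\<kappa> L) ({..<(q - 1) div d L} \<times> {..<d L} \<times> {0}) (L - {0})" if "L \<in> S" for L
      using \<kappa>[OF that] by (simp add: P_def)
    show "fmap (\<kappa> L (j, l, 0)) = \<kappa> L (j, Suc l mod d L, 0)"
      if "L \<in> S" "j < (q - 1) div d L" "l < d L" for L j l
      using \<kappa>[OF that(1)] that(2,3) by (simp add: P_def)
    show "disjoint_family_on (\<lambda>L. L - {0}) S"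
      using disjoint_punctured_lines S by (rule disjoint_family_on_mono[rotated])
  qed (use tree_bij tree_comm assms in simp_all)
qed

lemma dg_iso_fgraph_fmap_regular:
  assumes "c \<noteq> 1" and "c \<noteq> - 1"
  shows "dg_iso (fgraph fmap) (dg_union (cyc 1) (line_cycles q c (\<beta> ^ 2) \<beta> (P1 q \<beta>)))"
  unfolding cyc_def
proof (rule dg_iso_fgraph_fmap[where \<theta> = "\<lambda>_. 0" and T = "{0}"])
  show "gline q c (\<beta> ^ 2) \<beta> L \<noteq> 0" if "L \<in> P1 q \<beta>" for L
    using gline_eq_0_iff[OF that] assms by simp
  show "{0} \<inter> (\<Union>L\<in>P1 q \<beta>. L - {0}) = {}" and "{0} \<union> (\<Union>L\<in>P1 q \<beta>. L - {0}) = UNIV"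
    unfolding UN_punctured_lines by auto
qed (simp_all add: fmap_def)

lemma dg_iso_fgraph_fmap_degenerate:
  assumes "c = 1 \<or> c = - 1"
  defines "w0 \<equiv> if c = 1 then 1 else \<beta>"
  shows "dg_iso (fgraph fmap)
    (dg_union (cyc_tree 1 (q - 1)) (line_cycles q c (\<beta> ^ 2) \<beta> (P1 q \<beta> - {line w0})))"
proof -
  have "w0 \<noteq> 0"
    using beta_nonzero by (simp add: w0_def)
  moreover have "gval w0 = 0"
    unfolding gval_eq_0_iff[OF \<open>w0 \<noteq> 0\<close>] using assms by (auto simp: w0_def)
  ultimately show ?thesis
  proof (rule line_tree_parametrization)
    fix \<theta> :: "nat \<times> nat \<Rightarrow> 'a"
    assume \<theta>: "bij_betw \<theta> ({0} \<times> {..q - 1}) (line w0)" "\<And>j. fmap (\<theta> (0, j)) = \<theta> (0, q - 1)"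
    show ?thesis
    proof (rule dg_iso_fgraph_fmap[OF _ _ \<theta>(1)])
      show "gline q c (\<beta> ^ 2) \<beta> L \<noteq> 0" if L: "L \<in> P1 q \<beta> - {line w0}" for L
      proof
        assume "gline q c (\<beta> ^ 2) \<beta> L = 0"
        then have "(c = 1 \<and> L = line 1) \<or> (c = - 1 \<and> L = line \<beta>)"
          using L gline_eq_0_iff by blast
        then have "L = line w0"
          using one_neq_minus_one by (auto simp: w0_def)
        with L show False
          by blast
      qed
      show "line w0 \<inter> (\<Union>L\<in>P1 q \<beta> - {line w0}. L - {0}) = {}"
        and "line w0 \<union> (\<Union>L\<in>P1 q \<beta> - {line w0}. L - {0}) = UNIV"
        unfolding UN_punctured_lines_Diff by auto
    qed (use \<theta>(2) in auto)
  qed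
qed

end

theorem mainTheorem6:
  fixes q p k :: nat and c a \<beta> :: "'a::{field,finite}"
  assumes "prime p" and "odd p" and "k \<ge> 1" and "q = p ^ k"
    and "card (UNIV :: 'a set) = q ^ 2"
    and "a \<in> subF q" and "a \<noteq> 0" and "\<not> (\<exists>z\<in>subF q. z ^ 2 = a)"
    and "\<beta> ^ 2 = a"
    and "c \<in> subF q"
  defines "f \<equiv> (\<lambda>X::'a. X * (X ^ (q - 1) - c) ^ (q + 1))"
  shows "(c \<notin> {0, 1, -1} \<longrightarrow>
           dg_iso (fgraph f) (dg_union (cyc 1) (line_cycles q c a \<beta> (P1 q \<beta>))))
       \<and> ((c = 1 \<or> c = -1) \<longrightarrow>
           dg_iso (fgraph f)
             (dg_union (cyc_tree 1 (q - 1))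
               (line_cycles q c a \<beta>
                  (P1 q \<beta> - {if c = 1 then Lline q \<beta> 1 0 else Lline q \<beta> 0 1}))))"
proof -
  have "p \<le> q"
    using power_increasing[of 1 k p] prime_gt_0_nat[OF assms(1)] assms(3,4) by simp
  moreover have "2 < p"
    using assms(1,2) prime_ge_2_nat[of p] by (cases "p = 2") auto
  ultimately have "1 < q"
    by simp
  interpret scaling_map q \<beta> c
  proof
    show "odd q"
      using assms(2,4) by simp
    show "(x + y) ^ q = x ^ q + y ^ q" for x y :: 'a
      using frobenius_add_prime_power[OF assms(1)] assms(4,5) by (metis power_mult)
  qed (use \<open>1 < q\<close> assms(5,6,8,9,10) in auto)
  have f: "f = fmap"
    by (simp add: f_def fmap_def gval_def fun_eq_iff)
  have L: "(if c = 1 then Lline q \<beta> 1 0 else Lline q \<beta> 0 1) = line (if c = 1 then 1 else \<beta>)"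
    by (simp add: Lline_eq_line)
  show ?thesis
    using dg_iso_fgraph_fmap_regular dg_iso_fgraph_fmap_degenerate
    unfolding f L assms(9)[symmetric] by auto
qed

end
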